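(* Let $n,m$ be positive integers and $\mathbf{r}=(r_1,\dots,r_m)$, $\mathbf{s}=(s_1,\dots,s_m)$ sequences of nonnegative integers with sums $r$ and $s$. Then \begin{multline*} \sum_{d_0,d_1,\dots,d_{n}\ge 0} |\mathrm{SB}(n,\mathbf{r},\mathbf{s};d_0,d_1,\dots,d_{n})| \frac{t_0^{d_0} t_1^{d_1} \cdots t_{n}^{d_{n}}}{d_0!d_1!\cdots d_{n}!} =\prod_{i=1}^n (t_0 + t_{1} +\dots + t_{i-1})^r (t_i + t_{i+1} +\dots + t_{n})^s\\ \times \prod_{i=1}^m (t_0+t_1+\dots+t_n)^{r_is_i} \prod_{1\le i<j\le n} \left(t_i + t_{i+1} +\dots + t_{j-1}\right)^m. \end{multline*}
   Context: For nonnegative integers $p,q$, the $(n,p,q)$-staircase is the set of cells $(i,j)$ with $1\le i\le p+n$, $1\le j\le n+q$, $i\le j+p$; the cell $(j+p,j)$ ($1\le j\le n$) is its $j$th diagonal cell (row $i>p$ contains $(i,i-p)$, column $j\le n$ contains $(j+p,j)$, other rows/columns contain no diagonal cell). Take pages = the $(n,r_i,s_i)$-staircases, $1\le i\le m$, identifying the $j$th diagonal cells of all pages for each $j$. An $(n,\mathbf{r},\mathbf{s})$-Selberg book is a filling of the resulting cells with $1,\dots,N$, $N=(r+s+1)n+m\binom n2+\sum_i r_is_i$, each used once, such that in each page every non-diagonal cell has entry larger than that of the diagonal cell in its row (if any) and smaller than that of the diagonal cell in its column (if any). With $e_j$ the entry of the $j$th diagonal cell, $e_0=0$, $e_{n+1}=N+1$,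 $\mathrm{SB}(n,\mathbf{r},\mathbf{s};d_0,\dots,d_n)$ is the set of such books with $d_j=e_{j+1}-e_j-1$ for $j=0,\dots,n$. *)

theory Defs
  imports "HOL-Analysis.Analysis"
begin

text \<open>Cells of a Selberg book: the shared diagonal cells \<open>SDiag j\<close> (1 \<le> j \<le> n),
  and the non-diagonal cells \<open>SOff k i j\<close> = cell (i,j) of page k (1 \<le> k \<le> m).\<close>
datatype sb_cell = SDiag nat | SOff nat nat nat

definition sb_cells :: "nat \<Rightarrow> nat \<Rightarrow> (nat \<Rightarrow> nat) \<Rightarrow> (nat \<Rightarrow> nat) \<Rightarrow> sb_cell set" where
  "sb_cells n m r s =
     SDiag ` {1..n} \<union>
     {SOff k i j | k i j. k \<in> {1..m} \<and> 1 \<le> i \<and> i \<le> r k + n \<and> 1 \<le> j \<and> j \<le> n + s k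
                        \<and> i \<le> j + r k \<and> i \<noteq> j + r k}"

definition sb_N :: "nat \<Rightarrow> nat \<Rightarrow> (nat \<Rightarrow> nat) \<Rightarrow> (nat \<Rightarrow> nat) \<Rightarrow> nat" where
  "sb_N n m r s = (sum r {1..m} + sum s {1..m} + 1) * n + m * (n choose 2)
                  + (\<Sum>i=1..m. r i * s i)"

definition sb_e :: "nat \<Rightarrow> nat \<Rightarrow> (nat \<Rightarrow> nat) \<Rightarrow> (nat \<Rightarrow> nat) \<Rightarrow> (sb_cell \<Rightarrow> nat) \<Rightarrow> nat \<Rightarrow> nat" where
  "sb_e n m r s F j = (if j = 0 then 0 else if j = n + 1 then sb_N n m r s + 1 else F (SDiag j))"

text \<open>Selberg books, as fillings F (set to 0 outside the cells, so that they are
  determined by their values on the cells).\<close>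
definition selberg_book :: "nat \<Rightarrow> nat \<Rightarrow> (nat \<Rightarrow> nat) \<Rightarrow> (nat \<Rightarrow> nat) \<Rightarrow> (sb_cell \<Rightarrow> nat) \<Rightarrow> bool" where
  "selberg_book n m r s F \<longleftrightarrow>
     bij_betw F (sb_cells n m r s) {1..sb_N n m r s} \<and>
     (\<forall>c. c \<notin> sb_cells n m r s \<longrightarrow> F c = 0) \<and>
     (\<forall>k i j. SOff k i j \<in> sb_cells n m r s \<longrightarrow>
         (r k < i \<longrightarrow> F (SOff k i j) > F (SDiag (i - r k))) \<and>
         (j \<le> n \<longrightarrow> F (SOff k i j) < F (SDiag j)))"

definition SB :: "nat \<Rightarrow> nat \<Rightarrow> (nat \<Rightarrow> nat) \<Rightarrow> (nat \<Rightarrow> nat) \<Rightarrow> (nat \<Rightarrow> nat) \<Rightarrow> (sb_cell \<Rightarrow> nat) set" where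
  "SB n m r s d = {F. selberg_book n m r s F \<and>
       (\<forall>j\<le>n. d j = sb_e n m r s F (j + 1) - sb_e n m r s F j - 1)}"

end

theory Submission
  imports Defs "HOL-Combinatorics.Permutations"
begin

text \<open>In a Selberg book each non-diagonal cell \<open>c\<close> is compared only with diagonal cells, so the
  constraints just say that its entry lies in one of the gaps between consecutive diagonal entries,
  with gap index in an interval \<open>[lo c, hi c]\<close>.  Sorting the books by the resulting gap assignment
  \<open>\<gamma>\<close>, the diagonal entries are forced, the \<open>g\<close>-th gap has length \<open>d g = #{c. \<gamma> c = g}\<close>, and the
  cells of each gap can be filled in any of \<open>d g!\<close> orders.  So the exponential generating function
  is \<open>\<Sum>\<^sub>\<gamma> \<Prod>\<^sub>c t (\<gamma> c) = \<Prod>\<^sub>c (t (lo c) + \<dots> + t (hi c))\<close>, and multiplying this out over the cells of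
  the staircases gives the stated product.\<close>

lemma card_bij_betw_PiE:
  assumes "finite A" "finite B" "card A = card B"
  shows "card {f \<in> A \<rightarrow>\<^sub>E B. bij_betw f A B} = fact (card A)"
proof -
  obtain h where h: "bij_betw h B A"
    using finite_same_card_bij[OF assms(2,1)] assms(3) by metis
  have "bij_betw (\<lambda>f x. if x \<in> A then h (f x) else x)
          {f \<in> A \<rightarrow>\<^sub>E B. bij_betw f A B} {p. p permutes A}"
  proof (rule bij_betw_byWitness[where f' = "\<lambda>p. restrict (inv_into B h \<circ> p) A"])
    show "\<forall>f\<in>{f \<in> A \<rightarrow>\<^sub>E B. bij_betw f A B}. restrict (inv_into B h \<circ> (\<lambda>x. if x \<in> A then h (f x) else x)) A = f"
      using h by (auto simp: fun_eq_iff PiE_def extensional_def bij_betw_def inv_into_f_f Pi_iff)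
    show "\<forall>p\<in>{p. p permutes A}. (\<lambda>x. if x \<in> A then h (restrict (inv_into B h \<circ> p) A x) else x) = p"
      using h by (auto simp: fun_eq_iff permutes_not_in permutes_in_image bij_betw_inv_into_right)
    show "(\<lambda>f x. if x \<in> A then h (f x) else x) ` {f \<in> A \<rightarrow>\<^sub>E B. bij_betw f A B} \<subseteq> {p. p permutes A}"
    proof clarify
      fix f assume f: "f \<in> A \<rightarrow>\<^sub>E B" "bij_betw f A B"
      have "bij_betw (h \<circ> f) A A"
        using bij_betw_trans[OF f(2) h] .
      then have "bij_betw (\<lambda>x. if x \<in> A then h (f x) else x) A A"
        by (rule bij_betw_cong[THEN iffD1, rotated]) simp
      then show "(\<lambda>x. if x \<in> A then h (f x) else x) permutes A"
        by (auto simp: permutes_altdef)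
    qed
    show "(\<lambda>p. restrict (inv_into B h \<circ> p) A) ` {p. p permutes A} \<subseteq> {f \<in> A \<rightarrow>\<^sub>E B. bij_betw f A B}"
    proof clarify
      fix p assume "p permutes A"
      then have b: "bij_betw (inv_into B h \<circ> p) A B"
        using bij_betw_trans[OF permutes_imp_bij bij_betw_inv_into[OF h]] by blast
      then have "bij_betw (restrict (inv_into B h \<circ> p) A) A B"
        by (rule bij_betw_cong[THEN iffD1, rotated]) simp
      moreover have "restrict (inv_into B h \<circ> p) A \<in> A \<rightarrow>\<^sub>E B"
        using bij_betwE[OF b] by auto
      ultimately show "restrict (inv_into B h \<circ> p) A \<in> A \<rightarrow>\<^sub>E B \<and> bij_betw (restrict (inv_into B h \<circ> p) A) A B"
        by blast
    qed
  qed
  then have "card {f \<in> A \<rightarrow>\<^sub>E B. bij_betw f A B} = card {p. p permutes A}"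
    by (rule bij_betw_same_card)
  then show ?thesis
    using card_permutations[OF refl assms(1)] by simp
qed

lemma infsum_card_fibres:
  fixes w :: "'b \<Rightarrow> 'c::{semiring_1, topological_comm_monoid_add, t2_space}"
  assumes "finite S" "f ` S \<subseteq> D"
  shows "(\<Sum>\<^sub>\<infinity>d\<in>D. of_nat (card {x\<in>S. f x = d}) * w d) = (\<Sum>x\<in>S. w (f x))"
proof -
  have "(\<Sum>\<^sub>\<infinity>d\<in>D. of_nat (card {x\<in>S. f x = d}) * w d)
      = (\<Sum>\<^sub>\<infinity>d\<in>f ` S. of_nat (card {x\<in>S. f x = d}) * w d)"
  proof (rule infsum_cong_neutral)
    fix d assume "d \<in> D - f ` S"
    then have "{x\<in>S. f x = d} = {}"
      by auto
    then show "of_nat (card {x\<in>S. f x = d}) * w d = 0"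
      by (simp only: card.empty of_nat_0 mult_zero_left)
  qed (use assms(2) in auto)
  also have "\<dots> = (\<Sum>d\<in>f ` S. \<Sum>x\<in>{x\<in>S. f x = d}. w (f x))"
    using assms(1) by (simp add: infsum_finite)
  also have "\<dots> = (\<Sum>x\<in>S. w (f x))"
    using assms(1) by (intro sum.group) auto
  finally show ?thesis .
qed

lemma strict_mono_upto:
  fixes e :: "nat \<Rightarrow> 'b::order"
  assumes step: "\<And>j. j < k \<Longrightarrow> e j < e (Suc j)" and "i < j" "j \<le> k"
  shows "e i < e j"
  using assms(2,3)
proof (induction j)
  case (Suc j)
  then show ?case
    using step[of j] by (cases "i = j") (auto intro: less_trans)
qed simp

lemma exists_interval_index:
  fixes e :: "nat \<Rightarrow> 'b::linorder"
  assumes "e 0 \<le> v" "v < e (Suc n)"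
  shows "\<exists>g\<le>n. e g \<le> v \<and> v < e (Suc g)"
  using assms(2)
proof (induction n)
  case (Suc k)
  then show ?case
    by (cases "v < e (Suc k)") (auto simp: not_less intro: le_SucI)
qed (use assms(1) in auto)

lemma card_indices_below:
  fixes e :: "nat \<Rightarrow> 'b::linorder"
  assumes mono: "\<And>i j. i < j \<Longrightarrow> j \<le> Suc n \<Longrightarrow> e i < e j"
    and "g \<le> n" "e g < v" "v < e (Suc g)"
  shows "card {j\<in>{1..n}. e j < v} = g"
proof -
  have "e j < v \<longleftrightarrow> j \<le> g" if "j \<le> n" for j
  proof
    assume "e j < v"
    show "j \<le> g"
    proof (rule ccontr)
      assume "\<not> j \<le> g"
      then have "e (Suc g) \<le> e j"
        using mono[of "Suc g" j] that by (cases "Suc g = j") auto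
      then show False
        using \<open>e j < v\<close> assms(4) by auto
    qed
  next
    assume "j \<le> g"
    then have "e j \<le> e g"
      using mono[of j g] assms(2) by (cases "j = g") auto
    then show "e j < v"
      using assms(3) by auto
  qed
  then have "{j\<in>{1..n}. e j < v} = {1..g}"
    using assms(2) by auto
  then show ?thesis
    by simp
qed

section \<open>Books with interval constraints\<close>

text \<open>The cells with \<open>lo c = hi c\<close> force the diagonal
  entries to increase.\<close>

locale chain_book =
  fixes n :: nat and Off :: "'a set" and diag :: "nat \<Rightarrow> 'a" and lo hi :: "'a \<Rightarrow> nat"
  assumes finite_Off: "finite Off"
    and inj_diag: "inj_on diag {1..n}"
    and diag_notin_Off: "j \<in> {1..n} \<Longrightarrow> diag j \<notin> Off"
    and lo_le_hi: "c \<in> Off \<Longrightarrow> lo c \<le> hi c"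
    and hi_le: "c \<in> Off \<Longrightarrow> hi c \<le> n"
    and chain: "1 \<le> j \<Longrightarrow> j < n \<Longrightarrow> \<exists>c\<in>Off. lo c = j \<and> hi c = j"
begin

definition cells :: "'a set" where
  "cells = diag ` {1..n} \<union> Off"

definition N :: nat where
  "N = n + card Off"

definition book :: "('a \<Rightarrow> nat) \<Rightarrow> bool" where
  "book F \<longleftrightarrow> bij_betw F cells {1..N} \<and> (\<forall>c. c \<notin> cells \<longrightarrow> F c = 0) \<and>
     (\<forall>c\<in>Off. (1 \<le> lo c \<longrightarrow> F (diag (lo c)) < F c) \<and> (hi c < n \<longrightarrow> F c < F (diag (Suc (hi c)))))"

definition diag_entry :: "('a \<Rightarrow> nat) \<Rightarrow> nat \<Rightarrow> nat" where
  "diag_entry F j = (if j = 0 then 0 else if j = Suc n then Suc N else F (diag j))"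

definition gap_length :: "('a \<Rightarrow> nat) \<Rightarrow> nat \<Rightarrow> nat" where
  "gap_length F j = diag_entry F (Suc j) - diag_entry F j - 1"

definition gap_index :: "('a \<Rightarrow> nat) \<Rightarrow> 'a \<Rightarrow> nat" where
  "gap_index F c = card {j\<in>{1..n}. diag_entry F j < F c}"

lemma finite_cells: "finite cells"
  unfolding cells_def using finite_Off by simp

lemma card_cells: "card cells = N"
proof -
  have "card cells = card (diag ` {1..n}) + card Off"
    unfolding cells_def using finite_Off diag_notin_Off by (intro card_Un_disjoint) auto
  then show ?thesis
    using inj_diag by (simp add: N_def card_image)
qed

lemma diag_in_cells: "j \<in> {1..n} \<Longrightarrow> diag j \<in> cells"
  and Off_subset_cells: "Off \<subseteq> cells"
  unfolding cells_def by auto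

lemma book_outside_cells: "book F \<Longrightarrow> x \<notin> cells \<Longrightarrow> F x = 0"
  unfolding book_def by blast

lemma book_value_range: "book F \<Longrightarrow> c \<in> cells \<Longrightarrow> F c \<in> {1..N}"
  unfolding book_def bij_betw_def by auto

lemma diag_entry_step:
  assumes F: "book F" and "j \<le> n"
  shows "diag_entry F j < diag_entry F (Suc j)"
proof -
  consider "j = 0" | "j = n" "1 \<le> j" | "1 \<le> j" "j < n"
    using assms(2) by linarith
  then show ?thesis
  proof cases
    case 1
    then show ?thesis
      using book_value_range[OF F diag_in_cells[of 1]] by (auto simp: diag_entry_def)
  next
    case 2
    then show ?thesis
      using book_value_range[OF F diag_in_cells[of n]] by (auto simp: diag_entry_def)
  next
    case 3
    then obtain c where "c \<in> Off" "lo c = j" "hi c = j"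
      using chain by blast
    then have "F (diag j) < F c" "F c < F (diag (Suc j))"
      using F 3 unfolding book_def by auto
    then show ?thesis
      using 3 by (auto simp: diag_entry_def)
  qed
qed

lemma diag_entry_less: "book F \<Longrightarrow> i < j \<Longrightarrow> j \<le> Suc n \<Longrightarrow> diag_entry F i < diag_entry F j"
  by (rule strict_mono_upto[of "Suc n"]) (auto intro: diag_entry_step)

lemma diag_entry_le: "book F \<Longrightarrow> i \<le> j \<Longrightarrow> j \<le> Suc n \<Longrightarrow> diag_entry F i \<le> diag_entry F j"
  using diag_entry_less[of F i j] by (cases "i = j") auto

lemma book_Off_not_diag_entry:
  assumes F: "book F" and c: "c \<in> Off" and j: "j \<in> {1..n}"
  shows "F c \<noteq> diag_entry F j"
proof
  assume "F c = diag_entry F j"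
  then have "F c = F (diag j)"
    using j by (auto simp: diag_entry_def)
  moreover have "inj_on F cells"
    using F unfolding book_def bij_betw_def by auto
  ultimately have "c = diag j"
    using c j Off_subset_cells diag_in_cells by (auto simp: inj_on_def)
  then show False
    using diag_notin_Off[OF j] c by simp
qed

lemma book_gap_index:
  assumes F: "book F" and c: "c \<in> Off"
  shows "gap_index F c \<le> n" "diag_entry F (gap_index F c) < F c" "F c < diag_entry F (Suc (gap_index F c))"
proof -
  have v: "F c \<in> {1..N}"
    using book_value_range[OF F] c Off_subset_cells by auto
  then obtain g where g: "g \<le> n" "diag_entry F g \<le> F c" "F c < diag_entry F (Suc g)"
    using exists_interval_index[of "diag_entry F" "F c" n] by (auto simp: diag_entry_def)
  have "diag_entry F g \<noteq> F c"
    using book_Off_not_diag_entry[OF F c, of g] g(1) v by (cases "g = 0") (auto simp: diag_entry_def)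
  then have "diag_entry F g < F c"
    using g(2) by simp
  moreover have "gap_index F c = g"
    unfolding gap_index_def
    by (rule card_indices_below[OF _ g(1)]) (use diag_entry_less[OF F] \<open>diag_entry F g < F c\<close> g(3) in auto)
  ultimately show "gap_index F c \<le> n" "diag_entry F (gap_index F c) < F c" "F c < diag_entry F (Suc (gap_index F c))"
    using g by simp_all
qed

lemma book_Off_between:
  assumes F: "book F" and c: "c \<in> Off"
  shows "diag_entry F (lo c) < F c" "F c < diag_entry F (Suc (hi c))"
proof -
  have constr: "(1 \<le> lo c \<longrightarrow> F (diag (lo c)) < F c) \<and> (hi c < n \<longrightarrow> F c < F (diag (Suc (hi c))))"
    using F c unfolding book_def by blast
  have "F c \<in> {1..N}"
    using book_value_range[OF F] c Off_subset_cells by auto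
  then show "diag_entry F (lo c) < F c" "F c < diag_entry F (Suc (hi c))"
    using constr lo_le_hi[OF c] hi_le[OF c] by (auto simp: diag_entry_def)
qed

lemma gap_index_bounds:
  assumes F: "book F" and c: "c \<in> Off"
  shows "gap_index F c \<in> {lo c..hi c}"
proof -
  note g = book_gap_index[OF F c] and between = book_Off_between[OF F c]
  have "diag_entry F (Suc (gap_index F c)) \<le> diag_entry F (lo c)" if "gap_index F c < lo c"
    using diag_entry_le[OF F] that lo_le_hi[OF c] hi_le[OF c] by simp
  moreover have "diag_entry F (Suc (hi c)) \<le> diag_entry F (gap_index F c)" if "hi c < gap_index F c"
    using diag_entry_le[OF F] that g(1) by simp
  ultimately show ?thesis
    using g between by (auto simp: not_less[symmetric])
qed

lemma book_gap_bij:
  assumes F: "book F" and g: "g \<le> n"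
  shows "bij_betw F {c\<in>Off. gap_index F c = g} {diag_entry F g<..<diag_entry F (Suc g)}"
proof -
  have inj: "inj_on F cells" and onto: "F ` cells = {1..N}"
    using F unfolding book_def bij_betw_def by auto
  have "F ` {c\<in>Off. gap_index F c = g} \<supseteq> {diag_entry F g<..<diag_entry F (Suc g)}"
  proof
    fix v assume v: "v \<in> {diag_entry F g<..<diag_entry F (Suc g)}"
    have "diag_entry F (Suc g) \<le> Suc N"
      using diag_entry_le[OF F, of "Suc g" "Suc n"] g by (simp add: diag_entry_def)
    then have "v \<in> F ` cells"
      using v onto by auto
    then obtain c where c: "c \<in> cells" "v = F c"
      by blast
    have "c \<in> Off"
    proof (rule ccontr)
      assume "c \<notin> Off"
      then obtain j where j: "j \<in> {1..n}" "v = diag_entry F j"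
        using c unfolding cells_def by (auto simp: diag_entry_def)
      have "j \<le> g \<or> Suc g \<le> j"
        by linarith
      then show False
        using v j diag_entry_le[OF F, of j g] diag_entry_le[OF F, of "Suc g" j] g by auto
    qed
    moreover have "gap_index F c = g"
      unfolding gap_index_def
      by (rule card_indices_below[OF _ g]) (use v c diag_entry_less[OF F] in auto)
    ultimately show "v \<in> F ` {c\<in>Off. gap_index F c = g}"
      using c by auto
  qed
  moreover have "F ` {c\<in>Off. gap_index F c = g} \<subseteq> {diag_entry F g<..<diag_entry F (Suc g)}"
    using book_gap_index[OF F] by auto
  moreover have "inj_on F {c\<in>Off. gap_index F c = g}"
    using inj Off_subset_cells by (auto intro: inj_on_subset)
  ultimately show ?thesis
    unfolding bij_betw_def by blast
qed

definition gap_cells :: "('a \<Rightarrow> nat) \<Rightarrow> nat \<Rightarrow> 'a set" where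
  "gap_cells \<gamma> g = {c\<in>Off. \<gamma> c = g}"

definition gap_count :: "('a \<Rightarrow> nat) \<Rightarrow> nat \<Rightarrow> nat" where
  "gap_count \<gamma> g = card (gap_cells \<gamma> g)"

text \<open>Where the diagonal entries of any book with gap assignment \<open>\<gamma>\<close> are forced to be.\<close>

definition diag_pos :: "('a \<Rightarrow> nat) \<Rightarrow> nat \<Rightarrow> nat" where
  "diag_pos \<gamma> j = j + (\<Sum>g<j. gap_count \<gamma> g)"

lemma gap_length_eq_gap_count:
  assumes "book F" "g \<le> n"
  shows "gap_length F g = gap_count (gap_index F) g"
  using bij_betw_same_card[OF book_gap_bij[OF assms]]
  by (simp add: gap_length_def gap_count_def gap_cells_def)

lemma diag_entry_eq_diag_pos:
  assumes F: "book F"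
  shows "j \<le> Suc n \<Longrightarrow> diag_entry F j = diag_pos (gap_index F) j"
proof (induction j)
  case 0
  then show ?case
    by (simp add: diag_entry_def diag_pos_def)
next
  case (Suc j)
  have "diag_entry F (Suc j) = diag_entry F j + gap_length F j + 1"
    using diag_entry_step[OF F, of j] Suc.prems by (simp add: gap_length_def)
  then show ?case
    using Suc gap_length_eq_gap_count[OF F, of j] by (simp add: diag_pos_def)
qed

lemma diag_pos_less: "i < j \<Longrightarrow> diag_pos \<gamma> i < diag_pos \<gamma> j"
  by (rule strict_mono_upto[of j]) (auto simp: diag_pos_def)

lemma diag_pos_le: "i \<le> j \<Longrightarrow> diag_pos \<gamma> i \<le> diag_pos \<gamma> j"
  using diag_pos_less[of i j \<gamma>] by (cases "i = j") auto

lemma gap_count_cong: "(\<And>c. c \<in> Off \<Longrightarrow> \<gamma> c = \<delta> c) \<Longrightarrow> gap_count \<gamma> = gap_count \<delta>"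
  unfolding gap_count_def gap_cells_def by (intro ext arg_cong[where f = card]) auto

lemma diag_pos_cong:
  assumes "\<And>c. c \<in> Off \<Longrightarrow> \<gamma> c = \<delta> c"
  shows "diag_pos \<gamma> = diag_pos \<delta>"
proof -
  have "gap_count \<gamma> = gap_count \<delta>"
    by (rule gap_count_cong) (rule assms)
  then show ?thesis
    by (simp add: diag_pos_def fun_eq_iff)
qed

definition gap_assignments :: "('a \<Rightarrow> nat) set" where
  "gap_assignments = (\<Pi>\<^sub>E c\<in>Off. {lo c..hi c})"

definition books_with_gaps :: "('a \<Rightarrow> nat) \<Rightarrow> ('a \<Rightarrow> nat) set" where
  "books_with_gaps \<gamma> = {F. book F \<and> (\<forall>c\<in>Off. gap_index F c = \<gamma> c)}"

definition gap_values :: "('a \<Rightarrow> nat) \<Rightarrow> nat \<Rightarrow> nat set" where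
  "gap_values \<gamma> g = {diag_pos \<gamma> g<..<diag_pos \<gamma> (Suc g)}"

definition block_fillings :: "('a \<Rightarrow> nat) \<Rightarrow> (nat \<Rightarrow> 'a \<Rightarrow> nat) set" where
  "block_fillings \<gamma> = (\<Pi>\<^sub>E g\<in>{..n}.
     {f \<in> gap_cells \<gamma> g \<rightarrow>\<^sub>E gap_values \<gamma> g. bij_betw f (gap_cells \<gamma> g) (gap_values \<gamma> g)})"

definition blocks :: "('a \<Rightarrow> nat) \<Rightarrow> ('a \<Rightarrow> nat) \<Rightarrow> nat \<Rightarrow> 'a \<Rightarrow> nat" where
  "blocks \<gamma> F = (\<lambda>g\<in>{..n}. restrict F (gap_cells \<gamma> g))"

lemma gap_assignmentsD:
  assumes "\<gamma> \<in> gap_assignments" "c \<in> Off"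
  shows "lo c \<le> \<gamma> c" "\<gamma> c \<le> hi c" "\<gamma> c \<le> n"
proof -
  show "lo c \<le> \<gamma> c" "\<gamma> c \<le> hi c"
    using assms unfolding gap_assignments_def by auto
  then show "\<gamma> c \<le> n"
    using hi_le[OF assms(2)] by simp
qed

lemma sum_gap_count:
  assumes "\<gamma> \<in> gap_assignments"
  shows "(\<Sum>g\<le>n. gap_count \<gamma> g) = card Off"
proof -
  have "(\<Sum>g\<le>n. gap_count \<gamma> g) = (\<Sum>g\<le>n. \<Sum>c\<in>{c\<in>Off. \<gamma> c = g}. 1)"
    by (simp add: gap_count_def gap_cells_def)
  also have "\<dots> = (\<Sum>c\<in>Off. 1)"
    using gap_assignmentsD(3)[OF assms] finite_Off by (intro sum.group) auto
  finally show ?thesis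
    by simp
qed

lemma diag_pos_top: "\<gamma> \<in> gap_assignments \<Longrightarrow> diag_pos \<gamma> (Suc n) = Suc N"
  using sum_gap_count by (simp add: diag_pos_def N_def lessThan_Suc_atMost)

lemma card_block_fillings: "card (block_fillings \<gamma>) = (\<Prod>g\<le>n. fact (gap_count \<gamma> g))"
proof -
  have "card (gap_values \<gamma> g) = card (gap_cells \<gamma> g)" for g
    by (simp add: gap_values_def diag_pos_def gap_count_def)
  then have "card {f \<in> gap_cells \<gamma> g \<rightarrow>\<^sub>E gap_values \<gamma> g. bij_betw f (gap_cells \<gamma> g) (gap_values \<gamma> g)}
      = fact (gap_count \<gamma> g)" for g
    using finite_Off by (simp add: card_bij_betw_PiE gap_count_def gap_cells_def gap_values_def)
  then show ?thesis
    by (simp add: block_fillings_def card_PiE)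
qed

lemma books_with_gaps_diag_entry:
  assumes "F \<in> books_with_gaps \<gamma>" "j \<le> Suc n"
  shows "diag_entry F j = diag_pos \<gamma> j"
  using assms diag_entry_eq_diag_pos diag_pos_cong[of "gap_index F" \<gamma>]
  unfolding books_with_gaps_def by auto

lemma blocks_in_block_fillings:
  assumes F: "F \<in> books_with_gaps \<gamma>"
  shows "blocks \<gamma> F \<in> block_fillings \<gamma>"
proof -
  have "restrict F (gap_cells \<gamma> g) \<in> {f \<in> gap_cells \<gamma> g \<rightarrow>\<^sub>E gap_values \<gamma> g.
          bij_betw f (gap_cells \<gamma> g) (gap_values \<gamma> g)}" if g: "g \<le> n" for g
  proof -
    have "gap_cells \<gamma> g = {c\<in>Off. gap_index F c = g}"
      using F unfolding books_with_gaps_def gap_cells_def by auto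
    moreover have "gap_values \<gamma> g = {diag_entry F g<..<diag_entry F (Suc g)}"
      using books_with_gaps_diag_entry[OF F] g by (simp add: gap_values_def)
    ultimately have "bij_betw F (gap_cells \<gamma> g) (gap_values \<gamma> g)"
      using book_gap_bij[OF _ g] F unfolding books_with_gaps_def by simp
    then show ?thesis
      using bij_betwE by (auto simp: bij_betw_cong[of _ "restrict _ _"])
  qed
  then show ?thesis
    unfolding block_fillings_def blocks_def by auto
qed

lemma inj_on_blocks:
  assumes \<gamma>: "\<gamma> \<in> gap_assignments"
  shows "inj_on (blocks \<gamma>) (books_with_gaps \<gamma>)"
proof (rule inj_onI)
  fix F F' assume F: "F \<in> books_with_gaps \<gamma>" and F': "F' \<in> books_with_gaps \<gamma>"
    and eq: "blocks \<gamma> F = blocks \<gamma> F'"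
  show "F = F'"
  proof
    fix x
    consider "x \<in> Off" | j where "j \<in> {1..n}" "x = diag j" | "x \<notin> cells"
      unfolding cells_def by blast
    then show "F x = F' x"
    proof cases
      case 1
      then have "x \<in> gap_cells \<gamma> (\<gamma> x)" "\<gamma> x \<le> n"
        using gap_assignmentsD[OF \<gamma>] by (auto simp: gap_cells_def)
      then show ?thesis
        using fun_cong[OF fun_cong[OF eq, of "\<gamma> x"], of x] by (simp add: blocks_def)
    next
      case 2
      then show ?thesis
        using books_with_gaps_diag_entry[OF F, of j] books_with_gaps_diag_entry[OF F', of j]
        by (simp add: diag_entry_def)
    next
      case 3
      then show ?thesis
        using F F' unfolding books_with_gaps_def book_def by auto
    qed
  qed
qed

definition assemble :: "('a \<Rightarrow> nat) \<Rightarrow> (nat \<Rightarrow> 'a \<Rightarrow> nat) \<Rightarrow> 'a \<Rightarrow> nat" where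
  "assemble \<gamma> \<phi> x =
     (if x \<in> Off then \<phi> (\<gamma> x) x
      else if x \<in> diag ` {1..n} then diag_pos \<gamma> (the_inv_into {1..n} diag x) else 0)"

context
  fixes \<gamma> \<phi>
  assumes \<gamma>: "\<gamma> \<in> gap_assignments" and \<phi>: "\<phi> \<in> block_fillings \<gamma>"
begin

lemma block_filling_bij: "g \<le> n \<Longrightarrow> bij_betw (\<phi> g) (gap_cells \<gamma> g) (gap_values \<gamma> g)"
  and block_filling_extensional: "g \<le> n \<Longrightarrow> \<phi> g \<in> gap_cells \<gamma> g \<rightarrow>\<^sub>E gap_values \<gamma> g"
  and block_filling_undefined: "\<not> g \<le> n \<Longrightarrow> \<phi> g = undefined"
  using \<phi> unfolding block_fillings_def by auto

lemma assemble_diag: "j \<in> {1..n} \<Longrightarrow> assemble \<gamma> \<phi> (diag j) = diag_pos \<gamma> j"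
  using diag_notin_Off the_inv_into_f_f[OF inj_diag] by (simp add: assemble_def)

lemma assemble_Off: "c \<in> Off \<Longrightarrow> assemble \<gamma> \<phi> c \<in> gap_values \<gamma> (\<gamma> c)"
  using bij_betwE[OF block_filling_bij[OF gap_assignmentsD(3)[OF \<gamma>]]]
  by (simp add: assemble_def gap_cells_def)

lemma assemble_diag_entry: "j \<le> Suc n \<Longrightarrow> diag_entry (assemble \<gamma> \<phi>) j = diag_pos \<gamma> j"
  using assemble_diag diag_pos_top[OF \<gamma>] by (auto simp: diag_entry_def diag_pos_def)

lemma assemble_image: "assemble \<gamma> \<phi> ` cells = {1..N}"
proof (intro equalityI subsetI)
  fix v assume "v \<in> assemble \<gamma> \<phi> ` cells"
  then obtain x where x: "x \<in> cells" "v = assemble \<gamma> \<phi> x"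
    by blast
  then consider "x \<in> Off" | j where "j \<in> {1..n}" "x = diag j"
    unfolding cells_def by blast
  then show "v \<in> {1..N}"
  proof cases
    case 1
    have "diag_pos \<gamma> (Suc (\<gamma> x)) \<le> diag_pos \<gamma> (Suc n)"
      using gap_assignmentsD(3)[OF \<gamma> 1] by (intro diag_pos_le) simp
    then show ?thesis
      using assemble_Off[OF 1] x diag_pos_top[OF \<gamma>] by (auto simp: gap_values_def)
  next
    case 2
    have "j \<le> diag_pos \<gamma> j"
      by (simp add: diag_pos_def)
    moreover have "diag_pos \<gamma> j < diag_pos \<gamma> (Suc n)"
      using 2 by (intro diag_pos_less) auto
    ultimately show ?thesis
      using 2 x assemble_diag diag_pos_top[OF \<gamma>] by auto
  qed
next
  fix v assume v: "v \<in> {1..N}"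
  then obtain g where g: "g \<le> n" "diag_pos \<gamma> g \<le> v" "v < diag_pos \<gamma> (Suc g)"
    using exists_interval_index[of "diag_pos \<gamma>" v n] diag_pos_top[OF \<gamma>]
    by (auto simp: diag_pos_def)
  show "v \<in> assemble \<gamma> \<phi> ` cells"
  proof (cases "v = diag_pos \<gamma> g")
    case True
    then have "g \<in> {1..n}"
      using g(1) v by (cases g) (auto simp: diag_pos_def)
    then show ?thesis
      using True assemble_diag diag_in_cells by (metis image_eqI)
  next
    case False
    then have "v \<in> \<phi> g ` gap_cells \<gamma> g"
      using g bij_betw_imp_surj_on[OF block_filling_bij[OF g(1)]] by (auto simp: gap_values_def)
    then obtain c where "c \<in> Off" "\<gamma> c = g" "v = \<phi> g c"
      by (auto simp: gap_cells_def)
    then show ?thesis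
      using Off_subset_cells by (auto simp: assemble_def intro!: image_eqI[of v _ c])
  qed
qed

lemma assemble_book: "book (assemble \<gamma> \<phi>)"
proof -
  have "inj_on (assemble \<gamma> \<phi>) cells"
    using assemble_image card_cells finite_cells by (intro eq_card_imp_inj_on) auto
  then have "bij_betw (assemble \<gamma> \<phi>) cells {1..N}"
    using assemble_image by (simp add: bij_betw_def)
  moreover have "\<forall>c. c \<notin> cells \<longrightarrow> assemble \<gamma> \<phi> c = 0"
    unfolding cells_def assemble_def by auto
  moreover have "assemble \<gamma> \<phi> (diag (lo c)) < assemble \<gamma> \<phi> c" if "c \<in> Off" "1 \<le> lo c" for c
    using assemble_Off[OF that(1)] assemble_diag[of "lo c"] diag_pos_le[of "lo c" "\<gamma> c" \<gamma>]
      gap_assignmentsD[OF \<gamma> that(1)] that(2) by (simp add: gap_values_def)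
  moreover have "assemble \<gamma> \<phi> c < assemble \<gamma> \<phi> (diag (Suc (hi c)))" if "c \<in> Off" "hi c < n" for c
    using assemble_Off[OF that(1)] assemble_diag[of "Suc (hi c)"]
      diag_pos_le[of "Suc (\<gamma> c)" "Suc (hi c)" \<gamma>] gap_assignmentsD[OF \<gamma> that(1)] that(2)
    by (simp add: gap_values_def)
  ultimately show ?thesis
    unfolding book_def by blast
qed

lemma assemble_gap_index:
  assumes c: "c \<in> Off"
  shows "gap_index (assemble \<gamma> \<phi>) c = \<gamma> c"
  unfolding gap_index_def
proof (rule card_indices_below)
  show "\<gamma> c \<le> n"
    using gap_assignmentsD(3)[OF \<gamma> c] .
  then show "diag_entry (assemble \<gamma> \<phi>) (\<gamma> c) < assemble \<gamma> \<phi> c"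
    "assemble \<gamma> \<phi> c < diag_entry (assemble \<gamma> \<phi>) (Suc (\<gamma> c))"
    using assemble_Off[OF c] assemble_diag_entry by (auto simp: gap_values_def)
qed (simp add: assemble_diag_entry diag_pos_less)

lemma blocks_assemble: "blocks \<gamma> (assemble \<gamma> \<phi>) = \<phi>"
proof
  fix g
  show "blocks \<gamma> (assemble \<gamma> \<phi>) g = \<phi> g"
  proof (cases "g \<le> n")
    case True
    then show ?thesis
      using block_filling_extensional[OF True]
      by (auto simp: blocks_def assemble_def gap_cells_def PiE_def extensional_def fun_eq_iff)
  qed (simp add: blocks_def block_filling_undefined)
qed

end

lemma bij_betw_blocks:
  assumes "\<gamma> \<in> gap_assignments"
  shows "bij_betw (blocks \<gamma>) (books_with_gaps \<gamma>) (block_fillings \<gamma>)"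
proof -
  have "block_fillings \<gamma> \<subseteq> blocks \<gamma> ` books_with_gaps \<gamma>"
  proof
    fix \<phi> assume \<phi>: "\<phi> \<in> block_fillings \<gamma>"
    have "assemble \<gamma> \<phi> \<in> books_with_gaps \<gamma>"
      using assemble_book[OF assms \<phi>] assemble_gap_index[OF assms \<phi>] by (simp add: books_with_gaps_def)
    then show "\<phi> \<in> blocks \<gamma> ` books_with_gaps \<gamma>"
      using blocks_assemble[OF assms \<phi>] by (metis image_eqI)
  qed
  then show ?thesis
    using inj_on_blocks[OF assms] blocks_in_block_fillings by (auto simp: bij_betw_def)
qed

lemma card_books_with_gaps:
  "\<gamma> \<in> gap_assignments \<Longrightarrow> card (books_with_gaps \<gamma>) = (\<Prod>g\<le>n. fact (gap_count \<gamma> g))"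
  using bij_betw_same_card[OF bij_betw_blocks] card_block_fillings by simp

lemma finite_books: "finite {F. book F}"
proof (rule inj_on_finite[where f = "\<lambda>F. restrict F cells"])
  show "inj_on (\<lambda>F. restrict F cells) {F. book F}"
  proof (rule inj_onI)
    fix F F' assume F: "F \<in> {F. book F}" and F': "F' \<in> {F. book F}"
      and eq: "restrict F cells = restrict F' cells"
    show "F = F'"
    proof
      fix x
      show "F x = F' x"
        using fun_cong[OF eq, of x] F F' by (cases "x \<in> cells") (auto simp: book_outside_cells)
    qed
  qed
  show "(\<lambda>F. restrict F cells) ` {F. book F} \<subseteq> cells \<rightarrow>\<^sub>E {1..N}"
    using book_value_range by auto
  show "finite (cells \<rightarrow>\<^sub>E {1..N})"
    using finite_cells by (intro finite_PiE) auto
qed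

lemma prod_power_gap_count:
  fixes t :: "nat \<Rightarrow> 'b::comm_monoid_mult"
  assumes "\<gamma> \<in> gap_assignments"
  shows "(\<Prod>g\<le>n. t g ^ gap_count \<gamma> g) = (\<Prod>c\<in>Off. t (\<gamma> c))"
proof -
  have "(\<Prod>c\<in>{c\<in>Off. \<gamma> c = g}. t (\<gamma> c)) = t g ^ gap_count \<gamma> g" for g
  proof -
    have "(\<Prod>c\<in>{c\<in>Off. \<gamma> c = g}. t (\<gamma> c)) = (\<Prod>c\<in>{c\<in>Off. \<gamma> c = g}. t g)"
      by (rule prod.cong) auto
    then show ?thesis
      by (simp add: gap_count_def gap_cells_def)
  qed
  then have "(\<Prod>g\<le>n. t g ^ gap_count \<gamma> g) = (\<Prod>g\<le>n. \<Prod>c\<in>{c\<in>Off. \<gamma> c = g}. t (\<gamma> c))"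
    by simp
  also have "\<dots> = (\<Prod>c\<in>Off. t (\<gamma> c))"
    using gap_assignmentsD(3)[OF assms] finite_Off by (intro prod.group) auto
  finally show ?thesis .
qed

lemma sum_books_with_gaps:
  fixes t :: "nat \<Rightarrow> 'b::field_char_0"
  assumes \<gamma>: "\<gamma> \<in> gap_assignments"
  shows "(\<Sum>F\<in>books_with_gaps \<gamma>. \<Prod>j\<le>n. t j ^ gap_length F j / fact (gap_length F j))
       = (\<Prod>c\<in>Off. t (\<gamma> c))"
proof -
  have "gap_length F j = gap_count \<gamma> j" if "F \<in> books_with_gaps \<gamma>" "j \<le> n" for F j
    using that gap_length_eq_gap_count gap_count_cong[of "gap_index F" \<gamma>]
    by (auto simp: books_with_gaps_def)
  then have "(\<Sum>F\<in>books_with_gaps \<gamma>. \<Prod>j\<le>n. t j ^ gap_length F j / fact (gap_length F j))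
      = (\<Sum>F\<in>books_with_gaps \<gamma>. \<Prod>j\<le>n. t j ^ gap_count \<gamma> j / fact (gap_count \<gamma> j))"
    by (intro sum.cong prod.cong) auto
  also have "\<dots> = of_nat (card (books_with_gaps \<gamma>)) * (\<Prod>j\<le>n. t j ^ gap_count \<gamma> j / fact (gap_count \<gamma> j))"
    by (rule sum_constant)
  also have "\<dots> = (\<Prod>j\<le>n. fact (gap_count \<gamma> j) * (t j ^ gap_count \<gamma> j / fact (gap_count \<gamma> j)))"
    unfolding card_books_with_gaps[OF \<gamma>] of_nat_prod of_nat_fact by (rule prod.distrib[symmetric])
  also have "\<dots> = (\<Prod>j\<le>n. t j ^ gap_count \<gamma> j)"
    by (intro prod.cong) auto
  finally show ?thesis
    using prod_power_gap_count[OF \<gamma>] by simp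
qed

theorem sum_book_weights:
  fixes t :: "nat \<Rightarrow> 'b::field_char_0"
  shows "(\<Sum>F | book F. \<Prod>j\<le>n. t j ^ gap_length F j / fact (gap_length F j))
       = (\<Prod>c\<in>Off. \<Sum>g=lo c..hi c. t g)"
proof -
  let ?w = "\<lambda>F. \<Prod>j\<le>n. t j ^ gap_length F j / fact (gap_length F j)"
  have fibre: "{F \<in> {F. book F}. restrict (gap_index F) Off = \<gamma>} = books_with_gaps \<gamma>"
    if "\<gamma> \<in> gap_assignments" for \<gamma>
    using that by (auto simp: books_with_gaps_def gap_assignments_def PiE_def extensional_def fun_eq_iff)
  have "(\<lambda>F. restrict (gap_index F) Off) ` {F. book F} \<subseteq> gap_assignments"
    using gap_index_bounds by (auto simp: gap_assignments_def)
  moreover have "finite gap_assignments"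
    unfolding gap_assignments_def using finite_Off by (intro finite_PiE) auto
  ultimately have "(\<Sum>F | book F. ?w F)
      = (\<Sum>\<gamma>\<in>gap_assignments. \<Sum>F\<in>{F \<in> {F. book F}. restrict (gap_index F) Off = \<gamma>}. ?w F)"
    using finite_books by (intro sum.group[symmetric]) auto
  also have "\<dots> = (\<Sum>\<gamma>\<in>gap_assignments. \<Prod>c\<in>Off. t (\<gamma> c))"
    using fibre sum_books_with_gaps by (intro sum.cong) auto
  also have "\<dots> = (\<Prod>c\<in>Off. \<Sum>g=lo c..hi c. t g)"
    using prod_sum_PiE[OF finite_Off, of "\<lambda>c. {lo c..hi c}" "\<lambda>_. t"]
    by (simp add: gap_assignments_def)
  finally show ?thesis .
qed

end

section \<open>Selberg books\<close>

definition staircase_offdiag :: "nat \<Rightarrow> nat \<Rightarrow> nat \<Rightarrow> (nat \<times> nat) set" where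
  "staircase_offdiag n p q = {(i, j). 1 \<le> i \<and> i \<le> p + n \<and> 1 \<le> j \<and> j \<le> n + q \<and> i < j + p}"

lemma staircase_offdiag_rows: "staircase_offdiag n p q = Sigma {1..p + n} (\<lambda>i. {i - p<..n + q})"
  by (auto simp: staircase_offdiag_def)

lemma finite_staircase_offdiag: "finite (staircase_offdiag n p q)"
  unfolding staircase_offdiag_rows by auto

lemma prod_staircase_offdiag:
  fixes f :: "nat \<Rightarrow> nat \<Rightarrow> 'b::comm_monoid_mult"
  shows "(\<Prod>(i, j)\<in>staircase_offdiag n p q. f (i - p) (min (j - 1) n))
       = ((\<Prod>j\<in>{0<..n}. f 0 (j - 1)) * f 0 n ^ q) ^ p
         * (\<Prod>u=1..n. (\<Prod>j\<in>{u<..n}. f u (j - 1)) * f u n ^ q)"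
proof -
  define R where "R u = (\<Prod>j\<in>{u<..n + q}. f u (min (j - 1) n))" for u
  have row: "R u = (\<Prod>j\<in>{u<..n}. f u (j - 1)) * f u n ^ q" if "u \<le> n" for u
  proof -
    have "{u<..n + q} = {u<..n} \<union> {n<..n + q}"
      using that by auto
    then have "R u = (\<Prod>j\<in>{u<..n}. f u (min (j - 1) n)) * (\<Prod>j\<in>{n<..n + q}. f u (min (j - 1) n))"
      unfolding R_def by (simp add: prod.union_disjoint ivl_disj_int)
    also have "(\<Prod>j\<in>{u<..n}. f u (min (j - 1) n)) = (\<Prod>j\<in>{u<..n}. f u (j - 1))"
      by (intro prod.cong) auto
    also have "(\<Prod>j\<in>{n<..n + q}. f u (min (j - 1) n)) = (\<Prod>j\<in>{n<..n + q}. f u n)"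
      by (intro prod.cong) auto
    finally show ?thesis
      by simp
  qed
  have "(\<Prod>(i, j)\<in>staircase_offdiag n p q. f (i - p) (min (j - 1) n)) = (\<Prod>i\<in>{1..p + n}. R (i - p))"
    unfolding staircase_offdiag_rows R_def by (simp add: prod.Sigma)
  also have "{1..p + n} = {1..p} \<union> {1 + p..n + p}"
    by auto
  also have "(\<Prod>i\<in>{1..p} \<union> {1 + p..n + p}. R (i - p)) = (\<Prod>i\<in>{1..p}. R (i - p)) * (\<Prod>i\<in>{1 + p..n + p}. R (i - p))"
    by (rule prod.union_disjoint) auto
  also have "(\<Prod>i\<in>{1..p}. R (i - p)) = R 0 ^ p"
    by simp
  also have "(\<Prod>i\<in>{1 + p..n + p}. R (i - p)) = (\<Prod>u=1..n. R (u + p - p))"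
    by (rule prod.shift_bounds_cl_nat_ivl)
  finally show ?thesis
    using row by simp
qed

lemma sum_diff_eq_choose_two: "(\<Sum>u=1..n. n - u) = n choose 2"
proof (induction n)
  case (Suc n)
  have "(\<Sum>u=1..Suc n. Suc n - u) = (\<Sum>u=1..n. Suc n - u)"
    by simp
  also have "\<dots> = (\<Sum>u=1..n. (n - u) + 1)"
    by (intro sum.cong) auto
  also have "\<dots> = (\<Sum>u=1..n. n - u) + n"
    by (subst sum.distrib) simp
  finally show ?case
    using Suc by (simp add: numeral_2_eq_2)
qed simp

definition sb_offdiag :: "nat \<Rightarrow> nat \<Rightarrow> (nat \<Rightarrow> nat) \<Rightarrow> (nat \<Rightarrow> nat) \<Rightarrow> sb_cell set" where
  "sb_offdiag n m r s = (\<Union>k\<in>{1..m}. (\<lambda>(i, j). SOff k i j) ` staircase_offdiag n (r k) (s k))"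

text \<open>Cell \<open>(i, j)\<close> of page \<open>k\<close> must exceed the diagonal cell \<open>i - r k\<close> of its row and stay below
  the diagonal cell \<open>j\<close> of its column.  The truncated subtraction gives \<open>0\<close> exactly for the top
  \<open>r k\<close> rows and the minimum gives \<open>n\<close> exactly for the last \<open>s k\<close> columns, i.e.\ for the rows and
  columns without a diagonal cell.\<close>

definition sb_lo :: "(nat \<Rightarrow> nat) \<Rightarrow> sb_cell \<Rightarrow> nat" where
  "sb_lo r c = (case c of SOff k i j \<Rightarrow> i - r k | SDiag _ \<Rightarrow> 0)"

definition sb_hi :: "nat \<Rightarrow> sb_cell \<Rightarrow> nat" where
  "sb_hi n c = (case c of SOff k i j \<Rightarrow> min (j - 1) n | SDiag _ \<Rightarrow> 0)"

lemma SOff_in_sb_offdiag: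
  "SOff k i j \<in> sb_offdiag n m r s \<longleftrightarrow> k \<in> {1..m} \<and> (i, j) \<in> staircase_offdiag n (r k) (s k)"
  unfolding sb_offdiag_def by auto

lemma finite_sb_offdiag: "finite (sb_offdiag n m r s)"
  unfolding sb_offdiag_def using finite_staircase_offdiag by auto

lemma SDiag_notin_sb_offdiag: "SDiag j \<notin> sb_offdiag n m r s"
  unfolding sb_offdiag_def by auto

lemma sb_cells_eq: "sb_cells n m r s = SDiag ` {1..n} \<union> sb_offdiag n m r s"
proof (rule set_eqI)
  fix c
  show "c \<in> sb_cells n m r s \<longleftrightarrow> c \<in> SDiag ` {1..n} \<union> sb_offdiag n m r s"
    by (cases c)
       (auto simp: sb_cells_def SOff_in_sb_offdiag SDiag_notin_sb_offdiag staircase_offdiag_def)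
qed

lemma prod_sb_offdiag:
  fixes f :: "nat \<Rightarrow> nat \<Rightarrow> 'b::comm_monoid_mult"
  shows "(\<Prod>c\<in>sb_offdiag n m r s. f (sb_lo r c) (sb_hi n c))
       = (\<Prod>k=1..m. ((\<Prod>j\<in>{0<..n}. f 0 (j - 1)) * f 0 n ^ s k) ^ r k
                    * (\<Prod>u=1..n. (\<Prod>j\<in>{u<..n}. f u (j - 1)) * f u n ^ s k))"
proof -
  have "(\<Prod>c\<in>sb_offdiag n m r s. f (sb_lo r c) (sb_hi n c))
      = (\<Prod>k=1..m. \<Prod>c\<in>(\<lambda>(i, j). SOff k i j) ` staircase_offdiag n (r k) (s k). f (sb_lo r c) (sb_hi n c))"
    unfolding sb_offdiag_def by (intro prod.UNION_disjoint) (auto simp: finite_staircase_offdiag)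
  also have "\<dots> = (\<Prod>k=1..m. \<Prod>(i, j)\<in>staircase_offdiag n (r k) (s k). f (i - r k) (min (j - 1) n))"
    by (intro prod.cong refl, subst prod.reindex)
       (auto simp: inj_on_def sb_lo_def sb_hi_def case_prod_beta)
  also have "\<dots> = (\<Prod>k=1..m. ((\<Prod>j\<in>{0<..n}. f 0 (j - 1)) * f 0 n ^ s k) ^ r k
                    * (\<Prod>u=1..n. (\<Prod>j\<in>{u<..n}. f u (j - 1)) * f u n ^ s k))"
    by (intro prod.cong refl prod_staircase_offdiag)
  finally show ?thesis .
qed

lemma card_sb_offdiag: "n + card (sb_offdiag n m r s) = sb_N n m r s"
proof -
  have row_factors: "(\<Prod>u=1..n. (2::nat) ^ (n - u) * 2 ^ q) = 2 ^ ((n choose 2) + q * n)" for q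
  proof -
    have "(\<Prod>u=1..n. (2::nat) ^ (n - u) * 2 ^ q) = 2 ^ (\<Sum>u=1..n. n - u) * (2 ^ q) ^ n"
      by (simp add: prod.distrib power_sum)
    then show ?thesis
      using sum_diff_eq_choose_two[of n] by (simp add: power_add power_mult)
  qed
  have "(2::nat) ^ card (sb_offdiag n m r s) = (\<Prod>c\<in>sb_offdiag n m r s. 2)"
    by simp
  also have "\<dots> = (\<Prod>k=1..m. (2 ^ n * 2 ^ s k) ^ r k * (\<Prod>u=1..n. 2 ^ (n - u) * 2 ^ s k))"
    using prod_sb_offdiag[where f = "\<lambda>_ _. 2::nat"] by simp
  also have "\<dots> = (\<Prod>k=1..m. 2 ^ ((n + s k) * r k) * 2 ^ ((n choose 2) + s k * n))"
    by (simp only: row_factors power_add power_mult)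
  also have "\<dots> = (\<Prod>k=1..m. 2 ^ ((n + s k) * r k + ((n choose 2) + s k * n)))"
    by (simp only: power_add)
  also have "\<dots> = 2 ^ (\<Sum>k=1..m. (n + s k) * r k + ((n choose 2) + s k * n))"
    by (simp add: power_sum)
  finally have "card (sb_offdiag n m r s) = (\<Sum>k=1..m. (n + s k) * r k + ((n choose 2) + s k * n))"
    by (simp add: power_inject_exp)
  then show ?thesis
    by (simp add: sb_N_def sum.distrib sum_distrib_left sum_distrib_right algebra_simps)
qed

lemma chain_book_selberg:
  assumes "0 < m"
  shows "chain_book n (sb_offdiag n m r s) SDiag (sb_lo r) (sb_hi n)"
proof
  show "finite (sb_offdiag n m r s)"
    by (rule finite_sb_offdiag)
  show "inj_on SDiag {1..n}"
    by (simp add: inj_on_def)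
  show "SDiag j \<notin> sb_offdiag n m r s" for j
    by (rule SDiag_notin_sb_offdiag)
  show "sb_lo r c \<le> sb_hi n c" "sb_hi n c \<le> n" if "c \<in> sb_offdiag n m r s" for c
    using that by (auto simp: sb_offdiag_def staircase_offdiag_def sb_lo_def sb_hi_def)
  show "\<exists>c\<in>sb_offdiag n m r s. sb_lo r c = j \<and> sb_hi n c = j" if "1 \<le> j" "j < n" for j
  proof
    show "SOff 1 (j + r 1) (j + 1) \<in> sb_offdiag n m r s"
      using that assms by (simp add: SOff_in_sb_offdiag staircase_offdiag_def)
  qed (use that in \<open>simp add: sb_lo_def sb_hi_def\<close>)
qed

context
  fixes n m :: nat and r s :: "nat \<Rightarrow> nat"
  assumes m_pos: "0 < m"
begin

interpretation S: chain_book n "sb_offdiag n m r s" SDiag "sb_lo r" "sb_hi n"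
  using m_pos by (rule chain_book_selberg)

lemma selberg_book_iff_book: "selberg_book n m r s F \<longleftrightarrow> S.book F"
proof -
  have cells: "S.cells = sb_cells n m r s"
    by (simp add: S.cells_def sb_cells_eq)
  have N: "S.N = sb_N n m r s"
    using card_sb_offdiag by (simp add: S.N_def)
  define P where "P k i j \<longleftrightarrow>
    (r k < i \<longrightarrow> F (SDiag (i - r k)) < F (SOff k i j)) \<and> (j \<le> n \<longrightarrow> F (SOff k i j) < F (SDiag j))"
    for k i j
  define Q where "Q c \<longleftrightarrow>
    (1 \<le> sb_lo r c \<longrightarrow> F (SDiag (sb_lo r c)) < F c) \<and> (sb_hi n c < n \<longrightarrow> F c < F (SDiag (Suc (sb_hi n c))))"
    for c
  have PQ: "Q (SOff k i j) \<longleftrightarrow> P k i j" if "SOff k i j \<in> sb_offdiag n m r s" for k i j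
  proof -
    have "1 \<le> j"
      using that by (simp add: SOff_in_sb_offdiag staircase_offdiag_def)
    then show ?thesis
      by (auto simp: P_def Q_def sb_lo_def sb_hi_def min_def)
  qed
  have "(\<forall>k i j. SOff k i j \<in> sb_cells n m r s \<longrightarrow> P k i j) \<longleftrightarrow> (\<forall>c\<in>sb_offdiag n m r s. Q c)"
  proof
    assume P: "\<forall>k i j. SOff k i j \<in> sb_cells n m r s \<longrightarrow> P k i j"
    show "\<forall>c\<in>sb_offdiag n m r s. Q c"
    proof
      fix c assume c: "c \<in> sb_offdiag n m r s"
      then obtain k i j where "c = SOff k i j"
        by (auto simp: sb_offdiag_def)
      then show "Q c"
        using P PQ c by (simp add: sb_cells_eq)
    qed
  next
    assume "\<forall>c\<in>sb_offdiag n m r s. Q c"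
    then show "\<forall>k i j. SOff k i j \<in> sb_cells n m r s \<longrightarrow> P k i j"
      using PQ by (auto simp: sb_cells_eq image_iff)
  qed
  then show ?thesis
    unfolding selberg_book_def S.book_def cells N P_def Q_def by simp
qed

lemma SB_eq_books:
  assumes "d \<in> {..n} \<rightarrow>\<^sub>E UNIV"
  shows "SB n m r s d = {F \<in> {F. S.book F}. restrict (S.gap_length F) {..n} = d}"
proof -
  have "sb_e n m r s F = S.diag_entry F" for F
    using card_sb_offdiag by (simp add: sb_e_def S.diag_entry_def S.N_def fun_eq_iff)
  then show ?thesis
    using assms
    by (auto simp: SB_def selberg_book_iff_book S.gap_length_def PiE_def extensional_def fun_eq_iff)
qed

lemma selberg_book_sum:
  fixes t :: "nat \<Rightarrow> real"
  shows "(\<Sum>\<^sub>\<infinity>d\<in>{..n} \<rightarrow>\<^sub>E (UNIV :: nat set).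
            real (card (SB n m r s d)) * (\<Prod>j\<le>n. t j ^ d j / fact (d j)))
       = (\<Prod>c\<in>sb_offdiag n m r s. \<Sum>g=sb_lo r c..sb_hi n c. t g)"
proof -
  let ?w = "\<lambda>d. \<Prod>j\<le>n. t j ^ d j / fact (d j)"
  have "(\<Sum>\<^sub>\<infinity>d\<in>{..n} \<rightarrow>\<^sub>E UNIV. real (card (SB n m r s d)) * ?w d)
      = (\<Sum>\<^sub>\<infinity>d\<in>{..n} \<rightarrow>\<^sub>E UNIV.
           of_nat (card {F \<in> {F. S.book F}. restrict (S.gap_length F) {..n} = d}) * ?w d)"
    by (intro infsum_cong) (simp add: SB_eq_books)
  also have "\<dots> = (\<Sum>F | S.book F. ?w (restrict (S.gap_length F) {..n}))"
    by (intro infsum_card_fibres S.finite_books image_subsetI) simp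
  also have "\<dots> = (\<Sum>F | S.book F. \<Prod>j\<le>n. t j ^ S.gap_length F j / fact (S.gap_length F j))"
    by (intro sum.cong prod.cong) auto
  also have "\<dots> = (\<Prod>c\<in>sb_offdiag n m r s. \<Sum>g=sb_lo r c..sb_hi n c. t g)"
    by (rule S.sum_book_weights)
  finally show ?thesis .
qed

end

lemma prod_sb_offdiag_interval_sums:
  fixes t :: "nat \<Rightarrow> 'b::comm_semiring_1"
  shows "(\<Prod>c\<in>sb_offdiag n m r s. \<Sum>g=sb_lo r c..sb_hi n c. t g)
       = (\<Prod>i=1..n. (\<Sum>k<i. t k) ^ (\<Sum>l=1..m. r l) * (\<Sum>k=i..n. t k) ^ (\<Sum>l=1..m. s l))
         * (\<Prod>i=1..m. (\<Sum>k\<le>n. t k) ^ (r i * s i))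
         * (\<Prod>i\<in>{1..n}. \<Prod>j\<in>{i<..n}. (\<Sum>k=i..<j. t k) ^ m)"
proof -
  define A where "A = (\<Prod>i=1..n. \<Sum>k<i. t k)"
  define B where "B = (\<Prod>i=1..n. \<Sum>k=i..n. t k)"
  define C where "C = (\<Sum>k\<le>n. t k)"
  define D where "D = (\<Prod>i=1..n. \<Prod>j\<in>{i<..n}. \<Sum>k=i..<j. t k)"
  have first_rows: "(\<Prod>j\<in>{0<..n}. \<Sum>g=0..j - 1. t g) = A"
  proof -
    have "{0<..n} = {1..n}"
      by auto
    moreover have "{0..j - 1} = {..<j}" if "j \<in> {1..n}" for j
      using that by auto
    ultimately show ?thesis
      unfolding A_def by (intro prod.cong) auto
  qed
  have diagonal_rows: "(\<Prod>u=1..n. (\<Prod>j\<in>{u<..n}. \<Sum>g=u..j - 1. t g) * (\<Sum>g=u..n. t g) ^ q) = D * B ^ q"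
    for q
  proof -
    have "{u..j - 1} = {u..<j}" if "j \<in> {u<..n}" for u j
      using that by auto
    then have "(\<Prod>u=1..n. \<Prod>j\<in>{u<..n}. \<Sum>g=u..j - 1. t g) = D"
      unfolding D_def by (intro prod.cong refl) simp
    then show ?thesis
      by (simp add: prod.distrib prod_power_distrib B_def)
  qed
  have "(\<Prod>c\<in>sb_offdiag n m r s. \<Sum>g=sb_lo r c..sb_hi n c. t g)
      = (\<Prod>k=1..m. (A * C ^ s k) ^ r k * (D * B ^ s k))"
    unfolding prod_sb_offdiag[where f = "\<lambda>u v. \<Sum>g=u..v. t g"] first_rows diagonal_rows
    by (simp add: C_def atLeast0AtMost)
  also have "\<dots> = A ^ (\<Sum>l=1..m. r l) * B ^ (\<Sum>l=1..m. s l) * (\<Prod>i=1..m. C ^ (r i * s i)) * D ^ m"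
    by (simp add: prod.distrib power_mult_distrib power_sum ac_simps flip: power_mult)
  also have "\<dots> = (\<Prod>i=1..n. (\<Sum>k<i. t k) ^ (\<Sum>l=1..m. r l) * (\<Sum>k=i..n. t k) ^ (\<Sum>l=1..m. s l))
         * (\<Prod>i=1..m. (\<Sum>k\<le>n. t k) ^ (r i * s i))
         * (\<Prod>i\<in>{1..n}. \<Prod>j\<in>{i<..n}. (\<Sum>k=i..<j. t k) ^ m)"
    by (simp add: A_def B_def C_def D_def prod.distrib prod_power_distrib)
  finally show ?thesis .
qed

theorem proposition4p11:
  fixes n m :: nat and r s :: "nat \<Rightarrow> nat" and t :: "nat \<Rightarrow> real"
  assumes "0 < n" and "0 < m"
  shows "(\<Sum>\<^sub>\<infinity> d \<in> {..n} \<rightarrow>\<^sub>E (UNIV :: nat set).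
            real (card (SB n m r s d)) * (\<Prod>j\<le>n. t j ^ d j / fact (d j)))
       = (\<Prod>i=1..n. (\<Sum>k<i. t k) ^ (\<Sum>l=1..m. r l) * (\<Sum>k=i..n. t k) ^ (\<Sum>l=1..m. s l))
         * (\<Prod>i=1..m. (\<Sum>k\<le>n. t k) ^ (r i * s i))
         * (\<Prod>i\<in>{1..n}. \<Prod>j\<in>{i<..n}. (\<Sum>k=i..<j. t k) ^ m)"
  using selberg_book_sum[OF assms(2)] prod_sb_offdiag_interval_sums by simp

end
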